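(* Let $K\ge2$ and $\lambda>0$. Let $\mathbf H=\mathbf M^*=\frac{1}{\sqrt{K-1}}(\mathbf I_K-\frac1K\mathbf J_K)\in\mathbb R^{K\times K}$ with columns $\mathbf h_1,\dots,\mathbf h_K$, and define $L(\mathbf W)=\sum_{n=1}^K-\log\bigl(\mathrm{softmax}(\mathbf W\mathbf h_n)\bigr)_n$ for $\mathbf W\in\mathbb R^{K\times K}$. Consider sign gradient descent with coupled weight decay, $\mathbf W_{t+1}=\mathbf W_t-\eta_t\,\mathrm{sign}\bigl(\nabla L(\mathbf W_t)+\lambda\mathbf W_t\bigr)$, $\mathbf W_0=\mathbf 0$, with $\mathrm{sign}$ acting entrywise, and let $\alpha_t=\langle\mathbf W_t\mathbf W_t^\top,\hat{\mathbf J}\rangle_F$ with $\hat{\mathbf J}=\frac1K\mathbf 1_K\mathbf 1_K^\top$. Then there exists a sequence of learning rates $\eta_t>0$ with $\eta_t\to0$ as $t\to\infty$ such that $\alpha_t\to0$ as $t\to\infty$.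
   Context: $\mathbf I_K$ is the identity, $\mathbf 1_K$ the all-ones vector, $\mathbf J_K=\mathbf 1_K\mathbf 1_K^\top$, $\langle \mathbf A,\mathbf B\rangle_F=\mathrm{Tr}(\mathbf A^\top\mathbf B)$, $\mathrm{softmax}(z)_k=e^{z_k}/\sum_j e^{z_j}$, $\mathrm{sign}(0)=0$. "Coupled" weight decay means $\lambda\mathbf W_t$ is added to the gradient inside the sign. *)

theory Defs
  imports "HOL-Analysis.Analysis"
begin

text \<open>Matrices in R^{K x K} are rendered as real^'k^'k with 'k a finite index type, K = CARD('k).
  The Frobenius inner product is the inner product of real^'k^'k.\<close>

definition Hmat :: "real^'k^'k" where
  "Hmat = (\<chi> i j. (1 / sqrt (real CARD('k) - 1)) *
                   ((if i = j then 1 else 0) - 1 / real CARD('k)))"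

definition softmax :: "real^'k \<Rightarrow> real^'k" where
  "softmax z = (\<chi> k. exp (z $ k) / (\<Sum>j\<in>UNIV. exp (z $ j)))"

definition lossL :: "real^'k^'k \<Rightarrow> real" where
  "lossL W = (\<Sum>n\<in>UNIV. - ln (softmax (W *v column n Hmat) $ n))"

text \<open>Gradient with respect to the Frobenius inner product.\<close>
definition gradL :: "real^'k^'k \<Rightarrow> real^'k^'k" where
  "gradL W = (THE D. GDERIV lossL W :> D)"

definition sign_mat :: "real^'k^'k \<Rightarrow> real^'k^'k" where
  "sign_mat A = (\<chi> i j. sgn (A $ i $ j))"

fun signgd :: "(nat \<Rightarrow> real) \<Rightarrow> real \<Rightarrow> nat \<Rightarrow> real^'k^'k" where
  "signgd \<eta> lam 0 = 0"
| "signgd \<eta> lam (Suc t) =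
     signgd \<eta> lam t - \<eta> t *\<^sub>R sign_mat (gradL (signgd \<eta> lam t) + lam *\<^sub>R signgd \<eta> lam t)"

definition Jhat :: "real^'k^'k" where
  "Jhat = (\<chi> i j. 1 / real CARD('k))"

definition alpha :: "real^'k^'k \<Rightarrow> real" where
  "alpha W = inner (W ** transpose W) (Jhat :: real^'k^'k)"

end

theory Submission
  imports Defs
begin

text \<open>On the family \<open>diag_off x y = x I + y (J - I)\<close> we have \<open>W h\<^sub>n = (x - y) h\<^sub>n\<close>, since
  the columns of \<open>H\<close> sum to zero; so the softmax probabilities, and with them the gradient,
  depend only on the gap \<open>a = x - y\<close>: the gradient is again in the family, with off-diagonal
  entry \<open>\<phi>(a) = grad_offdiag K a > 0\<close> strictly decreasing in \<open>a\<close> and diagonal entry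
  \<open>-(K - 1) \<phi>(a)\<close>. Hence sign descent started at \<open>0\<close> never leaves the family. By the
  intermediate value theorem \<open>\<lambda> a = K \<phi>(a)\<close> for some \<open>a > 0\<close>, and then the decayed gradient
  vanishes at \<open>T = diag_off ((K - 1) a / K) (- a / K)\<close>. Since \<open>sign 0 = 0\<close>, \<open>T\<close> is fixed by
  every step, whatever the learning rate, and its columns sum to zero, so \<open>alpha T = 0\<close>. The
  first one (\<open>K = 2\<close>) or three (\<open>K > 2\<close>) learning rates are chosen so that the iterates land
  exactly on \<open>T\<close>; afterwards \<open>\<eta>\<^sub>t = 1 / (t + 1)\<close>.\<close>

definition outer_prod :: "real^'m \<Rightarrow> real^'n \<Rightarrow> real^'n^'m" where
  "outer_prod u v = (\<chi> i j. u $ i * v $ j)"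

lemma inner_outer_prod: "inner W (outer_prod u v) = inner u (W *v v)"
  by (simp add: outer_prod_def inner_vec_def matrix_vector_mult_def sum_distrib_left mult_ac)

lemma matrix_vector_mult_component_eq_inner:
  "(W *v v) $ j = inner W (outer_prod (axis j 1) v)"
  by (simp add: inner_outer_prod inner_axis')

lemma sum_scaleR_outer_prod_axis:
  "(\<Sum>j\<in>UNIV. c j *\<^sub>R outer_prod (axis j 1) v) = outer_prod (\<chi> j. c j) v"
  by (simp add: vec_eq_iff outer_prod_def axis_def mult_delta_left mult_delta_right)

lemma GDERIV_inner_const: "GDERIV (\<lambda>x. inner x D) x :> D"
  unfolding gderiv_def by (rule bounded_linear_imp_has_derivative) (rule bounded_linear_inner_left)

lemma GDERIV_sum:
  assumes "finite A" "\<And>a. a \<in> A \<Longrightarrow> GDERIV (f a) x :> D a"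
  shows "GDERIV (\<lambda>x. \<Sum>a\<in>A. f a x) x :> (\<Sum>a\<in>A. D a)"
  using assms unfolding gderiv_def inner_sum_right by (intro has_derivative_sum) auto

lemma GDERIV_unique:
  assumes "GDERIV f x :> D" and "GDERIV f x :> D'"
  shows "D = D'"
proof -
  have "(\<lambda>h. inner h D) = (\<lambda>h. inner h D')"
    using assms unfolding gderiv_def by (rule has_derivative_unique)
  then have "inner (D - D') D = inner (D - D') D'"
    by metis
  then have "inner (D - D') (D - D') = 0"
    by (simp add: inner_diff_right)
  then show ?thesis by simp
qed

lemma sum_exp_pos: "(\<Sum>j\<in>UNIV. exp (z $ j)) > (0::real)"
  for z :: "real^'k::finite"
  by (intro sum_pos) auto

lemma neg_ln_softmax_eq:
  "- ln (softmax z $ n) = ln (\<Sum>j\<in>UNIV. exp (z $ j)) - z $ n"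
  using sum_exp_pos[of z] by (simp add: softmax_def ln_div)

lemma GDERIV_neg_ln_softmax:
  "GDERIV (\<lambda>W. - ln (softmax (W *v v) $ n)) W :> outer_prod (softmax (W *v v) - axis n 1) v"
proof -
  define S where "S = (\<Sum>j\<in>UNIV. exp ((W *v v) $ j))"
  have "GDERIV (\<lambda>W. \<Sum>j\<in>UNIV. exp ((W *v v) $ j)) W
          :> (\<Sum>j\<in>UNIV. exp ((W *v v) $ j) *\<^sub>R outer_prod (axis j 1) v)"
    unfolding matrix_vector_mult_component_eq_inner
    by (intro GDERIV_sum GDERIV_DERIV_compose[OF GDERIV_inner_const] DERIV_exp) simp
  then have "GDERIV (\<lambda>W. ln (\<Sum>j\<in>UNIV. exp ((W *v v) $ j)) - (W *v v) $ n) W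
               :> inverse S *\<^sub>R (\<Sum>j\<in>UNIV. exp ((W *v v) $ j) *\<^sub>R outer_prod (axis j 1) v)
                  - outer_prod (axis n 1) v"
    unfolding matrix_vector_mult_component_eq_inner[of _ _ n] S_def
    by (intro GDERIV_diff GDERIV_DERIV_compose DERIV_ln sum_exp_pos GDERIV_inner_const)
  moreover have "inverse S *\<^sub>R (\<Sum>j\<in>UNIV. exp ((W *v v) $ j) *\<^sub>R outer_prod (axis j 1) v)
                  - outer_prod (axis n 1) v = outer_prod (softmax (W *v v) - axis n 1) v"
    unfolding sum_scaleR_outer_prod_axis
    by (simp add: vec_eq_iff outer_prod_def softmax_def S_def axis_def divide_inverse algebra_simps)
  ultimately show ?thesis
    by (simp add: neg_ln_softmax_eq)
qed

lemma gradL_eq: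
  "gradL W = (\<Sum>n\<in>UNIV. outer_prod (softmax (W *v column n Hmat) - axis n 1) (column n Hmat))"
proof -
  have "GDERIV lossL W :> (\<Sum>n\<in>UNIV. outer_prod (softmax (W *v column n Hmat) - axis n 1) (column n Hmat))"
    unfolding lossL_def[abs_def] by (intro GDERIV_sum GDERIV_neg_ln_softmax) simp
  then show ?thesis
    unfolding gradL_def using GDERIV_unique by blast
qed

lemma sum_if_eq_const:
  fixes n :: "'k::finite"
  shows "(\<Sum>j\<in>UNIV. if j = n then a else b) = a + (real CARD('k) - 1) * b"
proof -
  have "(\<Sum>j\<in>(UNIV::'k set). if j = n then a else b) = (\<Sum>j\<in>UNIV. (if j = n then a - b else 0) + b)"
    by (intro sum.cong) auto
  then show ?thesis by (simp add: sum.distrib algebra_simps)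
qed

lemma Hmat_nth:
  "(Hmat :: real^'k::finite^'k) $ i $ j = ((if i = j then 1 else 0) - 1 / real CARD('k)) / sqrt (real CARD('k) - 1)"
  by (simp add: Hmat_def)

lemma Hmat_column_sum: "(\<Sum>i\<in>UNIV. (Hmat :: real^'k::finite^'k) $ i $ j) = 0"
  by (simp add: Hmat_nth sum_divide_distrib[symmetric] sum_subtractf)

lemma Hmat_symmetric: "(Hmat :: real^'k::finite^'k) $ i $ j = Hmat $ j $ i"
  by (simp add: Hmat_nth eq_commute)

definition diag_off :: "real \<Rightarrow> real \<Rightarrow> real^'k^'k" where
  "diag_off x y = (\<chi> i j. if i = j then x else y)"

lemma diag_off_mult_vec:
  fixes v :: "real^'k::finite"
  assumes "(\<Sum>i\<in>UNIV. v $ i) = 0"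
  shows "diag_off x y *v v = (x - y) *\<^sub>R v"
proof -
  have "(\<Sum>j\<in>UNIV. (if i = j then x else y) * v $ j) = (x - y) * v $ i" for i
  proof -
    have "(\<Sum>j\<in>UNIV. (if i = j then x else y) * v $ j)
            = (\<Sum>j\<in>UNIV. (if i = j then (x - y) * v $ j else 0) + y * v $ j)"
      by (intro sum.cong) (auto simp: algebra_simps)
    then show ?thesis
      using assms by (simp add: sum.distrib sum_distrib_left[symmetric])
  qed
  then show ?thesis
    by (simp add: vec_eq_iff diag_off_def matrix_vector_mult_def)
qed

lemma softmax_add_const: "softmax (\<chi> j. f j + t) = softmax (\<chi> j. f j)"
  by (simp add: softmax_def vec_eq_iff exp_add sum_distrib_right[symmetric])

lemma softmax_delta:
  fixes n :: "'k::finite"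
  shows "softmax (\<chi> j. if j = n then a else 0) $ j
     = (if j = n then exp a else 1) / (exp a + real CARD('k) - 1)"
proof -
  have "(\<Sum>j\<in>(UNIV::'k set). exp (if j = n then a else 0)) = exp a + real CARD('k) - 1"
    by (simp add: if_distrib[of exp] sum_if_eq_const del: exp_eq_one_iff)
  then show ?thesis
    by (simp add: softmax_def if_distrib[of exp] del: exp_eq_one_iff)
qed

definition grad_offdiag :: "real \<Rightarrow> real \<Rightarrow> real" where
  "grad_offdiag k a = 1 / (sqrt (k - 1) * (exp (a / sqrt (k - 1)) + k - 1))"

lemma softmax_scaled_Hmat_column:
  fixes n :: "'k::finite"
  defines "k \<equiv> real CARD('k)"
  shows "softmax (a *\<^sub>R column n (Hmat :: real^'k^'k)) $ j
           = (if j = n then exp (a / sqrt (k - 1)) else 1) / (exp (a / sqrt (k - 1)) + k - 1)"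
proof -
  have "a *\<^sub>R column n (Hmat :: real^'k^'k)
          = (\<chi> j. (if j = n then a / sqrt (k - 1) else 0) + - (a / k / sqrt (k - 1)))"
    by (auto simp: vec_eq_iff column_def Hmat_nth k_def diff_divide_distrib right_diff_distrib)
  then show ?thesis
    by (simp only: softmax_add_const softmax_delta k_def)
qed

lemma gradL_diag_off:
  defines "k \<equiv> real CARD('k::finite)"
  shows "gradL (diag_off x y :: real^'k^'k)
           = diag_off (- (k - 1) * grad_offdiag k (x - y)) (grad_offdiag k (x - y))"
proof -
  define s where "s = sqrt (k - 1)"
  define E where "E = exp ((x - y) / s)"
  define Z where "Z = E + k - 1"
  have k1: "k \<ge> 1" unfolding k_def by (simp add: Suc_le_eq)
  have Z: "Z > 0" unfolding Z_def E_def using k1 by (smt (verit) exp_gt_zero)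
  have prob: "softmax (diag_off x y *v column n Hmat) $ i - axis n 1 $ i
                = 1 / Z - (if i = n then k / Z else 0)" for i n :: 'k
  proof -
    have "diag_off x y *v column n Hmat = (x - y) *\<^sub>R column n (Hmat :: real^'k^'k)"
      by (simp add: diag_off_mult_vec column_def Hmat_column_sum)
    then have p: "softmax (diag_off x y *v column n Hmat) $ i = (if i = n then E else 1) / Z"
      by (simp add: softmax_scaled_Hmat_column E_def Z_def s_def k_def)
    show ?thesis
      unfolding p using Z by (auto simp: axis_def field_simps Z_def[symmetric]) (simp add: Z_def)
  qed
  have "gradL (diag_off x y :: real^'k^'k) $ i $ l = (1 - (if i = l then k else 0)) / (s * Z)" for i l :: 'k
  proof -
    have "gradL (diag_off x y :: real^'k^'k) $ i $ l
            = (\<Sum>n\<in>UNIV. (softmax (diag_off x y *v column n Hmat) $ i - axis n 1 $ i)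
                             * column n Hmat $ l)"
      by (simp add: gradL_eq sum_component outer_prod_def)
    also have "\<dots> = (\<Sum>n\<in>UNIV. (1 / Z) * Hmat $ l $ n - (if i = n then k / Z * Hmat $ l $ n else 0))"
      by (simp only: prob) (simp add: column_def left_diff_distrib mult_delta_left)
    also have "\<dots> = - k / Z * Hmat $ l $ i"
      by (simp add: sum_subtractf sum_divide_distrib[symmetric] Hmat_column_sum Hmat_symmetric[of l])
    also have "\<dots> = (1 - (if i = l then k else 0)) / (s * Z)"
      using k1 Z by (cases "s = 0") (auto simp: Hmat_nth k_def[symmetric] s_def[symmetric] field_simps)
    finally show ?thesis .
  qed
  moreover have "grad_offdiag k (x - y) = 1 / (s * Z)"
    by (simp add: grad_offdiag_def s_def Z_def E_def)
  ultimately show ?thesis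
    by (simp add: vec_eq_iff diag_off_def field_simps)
qed

lemma diag_off_zero [simp]: "diag_off 0 0 = 0"
  by (simp add: vec_eq_iff diag_off_def)

lemma scaleR_diag_off [simp]: "r *\<^sub>R diag_off x y = diag_off (r * x) (r * y)"
  by (simp add: vec_eq_iff diag_off_def)

lemma diag_off_add [simp]: "diag_off a b + diag_off x y = diag_off (a + x) (b + y)"
  by (simp add: vec_eq_iff diag_off_def)

lemma diag_off_diff [simp]: "diag_off a b - diag_off x y = diag_off (a - x) (b - y)"
  by (simp add: vec_eq_iff diag_off_def)

lemma sign_mat_diag_off [simp]: "sign_mat (diag_off x y) = diag_off (sgn x) (sgn y)"
  by (simp add: vec_eq_iff diag_off_def sign_mat_def)

lemma signgd_Suc_diag_off:
  defines "k \<equiv> real CARD('k::finite)"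
  assumes "signgd \<eta> lam t = (diag_off x y :: real^'k^'k)"
  shows "signgd \<eta> lam (Suc t) = (diag_off
           (x - \<eta> t * sgn (lam * x - (k - 1) * grad_offdiag k (x - y)))
           (y - \<eta> t * sgn (grad_offdiag k (x - y) + lam * y)) :: real^'k^'k)"
  using assms by (simp add: gradL_diag_off algebra_simps)

lemma sign_mat_zero [simp]: "sign_mat 0 = 0"
  by (simp add: vec_eq_iff sign_mat_def)

lemma signgd_stationary:
  assumes "gradL W + lam *\<^sub>R W = 0" and "signgd \<eta> lam N = W" and "N \<le> t"
  shows "signgd \<eta> lam t = W"
  using assms(3)
proof (induction t rule: dec_induct)
  case base
  show ?case by (fact assms(2))
next
  case (step n)
  then show ?case
    using assms(1) by simp
qed

lemma alpha_eq_column_sums: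
  "alpha (W :: real^'k::finite^'k) = (\<Sum>l\<in>UNIV. (\<Sum>i\<in>UNIV. W $ i $ l)\<^sup>2) / real CARD('k)"
proof -
  have row: "(\<Sum>j\<in>UNIV. \<Sum>l\<in>UNIV. W $ i $ l * W $ j $ l) = (\<Sum>l\<in>UNIV. W $ i $ l * (\<Sum>j\<in>UNIV. W $ j $ l))"
    for i
    unfolding sum_distrib_left by (rule sum.swap)
  have "alpha W = (\<Sum>i\<in>UNIV. \<Sum>j\<in>UNIV. \<Sum>l\<in>UNIV. W $ i $ l * W $ j $ l) / real CARD('k)"
    by (simp add: alpha_def inner_vec_def Jhat_def matrix_matrix_mult_def transpose_def
        sum_divide_distrib)
  also have "\<dots> = (\<Sum>l\<in>UNIV. \<Sum>i\<in>UNIV. W $ i $ l * (\<Sum>j\<in>UNIV. W $ j $ l)) / real CARD('k)"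
    unfolding row by (subst sum.swap) (rule refl)
  also have "\<dots> = (\<Sum>l\<in>UNIV. (\<Sum>i\<in>UNIV. W $ i $ l)\<^sup>2) / real CARD('k)"
    by (simp add: power2_eq_square sum_distrib_right)
  finally show ?thesis .
qed

lemma alpha_diag_off:
  "alpha (diag_off x y :: real^'k::finite^'k) = (x + (real CARD('k) - 1) * y)\<^sup>2"
proof -
  have "(\<Sum>i\<in>UNIV. (diag_off x y :: real^'k^'k) $ i $ l) = x + (real CARD('k) - 1) * y" for l
    by (simp add: diag_off_def sum_if_eq_const)
  then show ?thesis
    by (simp add: alpha_eq_column_sums)
qed

lemma grad_offdiag_denominator_pos:
  assumes "k > 1"
  shows "sqrt (k - 1) * (exp (a / sqrt (k - 1)) + k - 1) > 0"
proof -
  have "exp (a / sqrt (k - 1)) + k - 1 > 0"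
    using assms exp_gt_zero[of "a / sqrt (k - 1)"] by linarith
  then show ?thesis
    using assms by (intro mult_pos_pos) auto
qed

lemma grad_offdiag_pos: "k > 1 \<Longrightarrow> grad_offdiag k a > 0"
  unfolding grad_offdiag_def using grad_offdiag_denominator_pos by simp

lemma grad_offdiag_strict_antimono:
  assumes "k > 1" and "a < b"
  shows "grad_offdiag k b < grad_offdiag k a"
proof -
  have "exp (a / sqrt (k - 1)) < exp (b / sqrt (k - 1))"
    using assms by (simp add: divide_strict_right_mono)
  then have "sqrt (k - 1) * (exp (a / sqrt (k - 1)) + k - 1) < sqrt (k - 1) * (exp (b / sqrt (k - 1)) + k - 1)"
    using assms(1) by (intro mult_strict_left_mono) auto
  then show ?thesis
    unfolding grad_offdiag_def
    using grad_offdiag_denominator_pos[OF assms(1)] by (intro divide_strict_left_mono) auto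
qed

lemma isCont_grad_offdiag: "k > 1 \<Longrightarrow> isCont (grad_offdiag k) a"
  unfolding grad_offdiag_def[abs_def]
  using grad_offdiag_denominator_pos by (intro continuous_intros) (auto simp: less_le)

lemma stationary_gap_exists:
  assumes "k > 1" and "lam > 0"
  shows "\<exists>a>0. lam * a = k * grad_offdiag k a"
proof -
  define b where "b = k * grad_offdiag k 0 / lam"
  have b: "b > 0"
    unfolding b_def using assms grad_offdiag_pos by simp
  have "grad_offdiag k b \<le> grad_offdiag k 0"
    using grad_offdiag_strict_antimono[OF assms(1) b] by simp
  then have "lam * 0 - k * grad_offdiag k 0 \<le> 0 \<and> 0 \<le> lam * b - k * grad_offdiag k b"
    using assms grad_offdiag_pos[OF assms(1), of 0] unfolding b_def by simp
  moreover have "isCont (\<lambda>a. lam * a - k * grad_offdiag k a) x" for x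
    using isCont_grad_offdiag[OF assms(1)] by (intro continuous_intros)
  ultimately obtain a where "0 \<le> a" "lam * a - k * grad_offdiag k a = 0"
    using IVT[of "\<lambda>a. lam * a - k * grad_offdiag k a" 0 0 b] b by auto
  moreover have "a \<noteq> 0"
    using calculation grad_offdiag_pos[OF assms(1), of 0] assms(1) by auto
  ultimately show ?thesis
    by (intro exI[of _ a]) auto
qed

lemma stationary_diag_off:
  defines "k \<equiv> real CARD('k::finite)"
  assumes "lam * a = k * grad_offdiag k a"
  shows "gradL (diag_off ((k - 1) * a / k) (- a / k) :: real^'k^'k)
           + lam *\<^sub>R diag_off ((k - 1) * a / k) (- a / k) = 0"
proof -
  have "k > 0" unfolding k_def by simp
  then have diff: "(k - 1) * a / k - - a / k = a" and "grad_offdiag k a = lam * a / k"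
    using assms(2) by (simp_all add: field_simps)
  then show ?thesis
    using \<open>k > 0\<close> unfolding gradL_diag_off k_def[symmetric] diff by (simp add: field_simps)
qed

lemma intermediate_gap_exists:
  assumes "k > 2" and "lam > 0" and "a > 0" and "lam * a = k * grad_offdiag k a"
  shows "\<exists>s. a / k < s \<and> s < a / 2 \<and> lam * s = grad_offdiag k (2 * s)"
proof -
  define g where "g s = lam * s - grad_offdiag k (2 * s)" for s
  have k1: "k > 1" using assms(1) by simp
  have \<phi>a: "grad_offdiag k a = lam * a / k"
    using assms(1,4) by (simp add: field_simps)
  have "2 * (a / k) < a"
    using assms(1,3) by (simp add: field_simps)
  then have "g (a / k) < 0"
    using grad_offdiag_strict_antimono[OF k1] \<phi>a unfolding g_def by fastforce
  moreover have "lam * a / k < lam * a / 2"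
    using assms(1-3) by (intro divide_strict_left_mono) auto
  then have "g (a / 2) > 0"
    using \<phi>a unfolding g_def by simp
  moreover have "a / k \<le> a / 2"
    using assms by (intro divide_left_mono) auto
  moreover have "isCont g x" for x
  proof -
    have "isCont (\<lambda>s. grad_offdiag k (2 * s)) x"
      by (rule isCont_o2[OF _ isCont_grad_offdiag[OF k1]]) simp
    then show ?thesis
      unfolding g_def by (intro continuous_intros)
  qed
  ultimately obtain s where "a / k \<le> s" "s \<le> a / 2" "g s = 0"
    using IVT[of g "a / k" 0 "a / 2"] by fastforce
  moreover have "s \<noteq> a / k" "s \<noteq> a / 2"
    using calculation \<open>g (a / k) < 0\<close> \<open>g (a / 2) > 0\<close> by auto
  ultimately show ?thesis
    unfolding g_def by (intro exI[of _ s]) auto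
qed

definition harmonic_after :: "real list \<Rightarrow> nat \<Rightarrow> real" where
  "harmonic_after xs t = (if t < length xs then xs ! t else inverse (real (Suc t)))"

lemma harmonic_after_pos: "(\<forall>x\<in>set xs. x > 0) \<Longrightarrow> harmonic_after xs t > 0"
  by (simp add: harmonic_after_def)

lemma harmonic_after_LIMSEQ: "harmonic_after xs \<longlonglongrightarrow> 0"
proof (rule Lim_transform_eventually[OF LIMSEQ_inverse_real_of_nat])
  show "\<forall>\<^sub>F t in sequentially. inverse (real (Suc t)) = harmonic_after xs t"
    unfolding eventually_sequentially harmonic_after_def by (intro exI[of _ "length xs"]) auto
qed

lemma signgd_one:
  assumes "CARD('k::finite) \<ge> 2"
  shows "signgd \<eta> lam 1 = (diag_off (\<eta> 0) (- \<eta> 0) :: real^'k^'k)"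
proof -
  define k where "k = real CARD('k)"
  have "k > 1" using assms unfolding k_def by simp
  then have "lam * 0 - (k - 1) * grad_offdiag k (0 - 0) < 0" and "grad_offdiag k (0 - 0) + lam * 0 > 0"
    using grad_offdiag_pos by simp_all
  moreover have "signgd \<eta> lam 0 = (diag_off 0 0 :: real^'k^'k)"
    by simp
  note signgd_Suc_diag_off[OF this]
  ultimately show ?thesis
    by (simp add: k_def)
qed

lemma signgd_three_step_path:
  defines "k \<equiv> real CARD('k::finite)"
  assumes "CARD('k) > 2" and "lam > 0" and "a > 0" and gap: "lam * a = k * grad_offdiag k a"
    and s: "a / k < s" and s_gap: "lam * s = grad_offdiag k (2 * s)"
    and \<eta>: "\<eta> 0 = s" "\<eta> 1 = a - 2 * s" "\<eta> 2 = s - a / k"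
  shows "signgd \<eta> lam 3 = (diag_off ((k - 1) * a / k) (- a / k) :: real^'k^'k)"
proof -
  txt \<open>The first step goes to \<open>diag_off s (- s)\<close>. There \<open>\<lambda> s = \<phi>(2 s)\<close> freezes the off-diagonal
    entry while the diagonal one grows to \<open>a - s\<close>; at gap \<open>a\<close> both decayed-gradient entries
    equal \<open>\<lambda> (a / k - s) < 0\<close>, so both entries grow by \<open>s - a / k\<close> and land on the target.\<close>
  have "k > 2" using assms(2) unfolding k_def by simp
  then have "k > 0" by simp
  have "s > 0"
    using s assms(4) \<open>k > 0\<close> by (smt (verit) divide_pos_pos)
  have "CARD('k) \<ge> 2" using assms(2) by simp
  then have W1: "signgd \<eta> lam 1 = (diag_off s (- s) :: real^'k^'k)"
    using signgd_one \<eta>(1) by metis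
  have "lam * s - (k - 1) * grad_offdiag k (s - - s) = - ((k - 2) * (lam * s))"
    using s_gap by (simp add: algebra_simps)
  moreover have "(k - 2) * (lam * s) > 0"
    using \<open>k > 2\<close> \<open>s > 0\<close> assms(3) by simp
  moreover have "grad_offdiag k (s - - s) + lam * - s = 0"
    using s_gap by simp
  ultimately have W2: "signgd \<eta> lam 2 = (diag_off (a - s) (- s) :: real^'k^'k)"
    using signgd_Suc_diag_off[OF W1[unfolded k_def]] \<eta>(2)
    by (simp add: numeral_2_eq_2 k_def)
  have "grad_offdiag k a = lam * a / k"
    using gap \<open>k > 0\<close> by (simp add: field_simps)
  then have "lam * (a - s) - (k - 1) * grad_offdiag k (a - s - - s) = lam * (a / k - s)"
    and "grad_offdiag k (a - s - - s) + lam * - s = lam * (a / k - s)"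
    using \<open>k > 0\<close> by (simp_all add: field_simps)
  moreover have "lam * (a / k - s) < 0"
    using assms(3) s by (simp add: mult_pos_neg)
  ultimately have "signgd \<eta> lam 3 = (diag_off (a - a / k) (- a / k) :: real^'k^'k)"
    using signgd_Suc_diag_off[OF W2[unfolded k_def]] \<eta>(3)
    by (simp add: numeral_3_eq_3 k_def)
  moreover have "a - a / k = (k - 1) * a / k"
    using \<open>k > 0\<close> by (simp add: field_simps)
  ultimately show ?thesis
    by simp
qed

lemma signgd_reaches_stationary:
  defines "k \<equiv> real CARD('k::finite)"
  assumes "CARD('k) \<ge> 2" and "lam > 0" and "a > 0" and gap: "lam * a = k * grad_offdiag k a"
  shows "\<exists>xs. (\<forall>x\<in>set xs. x > 0) \<and>
           signgd (harmonic_after xs) lam (length xs) = (diag_off ((k - 1) * a / k) (- a / k) :: real^'k^'k)"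
proof (cases "CARD('k) = 2")
  case True
  then have "k = 2" unfolding k_def by simp
  then have "signgd (harmonic_after [a / 2]) lam 1 = (diag_off ((k - 1) * a / k) (- a / k) :: real^'k^'k)"
    using signgd_one[OF assms(2)] by (simp add: harmonic_after_def)
  then show ?thesis
    using assms(4) by (intro exI[of _ "[a / 2]"]) simp
next
  case False
  then have "CARD('k) > 2" and "k > 2"
    using assms(2) unfolding k_def by simp_all
  then obtain s where s: "a / k < s" "s < a / 2" and s_gap: "lam * s = grad_offdiag k (2 * s)"
    using intermediate_gap_exists assms(3-5) by blast
  define xs where "xs = [s, a - 2 * s, s - a / k]"
  have "a / k > 0"
    using assms(4) \<open>k > 2\<close> by simp
  then have "\<forall>x\<in>set xs. x > 0"
    using s by (simp add: xs_def)
  moreover have len: "length xs = 3"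
    by (simp add: xs_def)
  have "signgd (harmonic_after xs) lam (length xs) = (diag_off ((k - 1) * a / k) (- a / k) :: real^'k^'k)"
    unfolding len k_def
    by (rule signgd_three_step_path[OF \<open>CARD('k) > 2\<close> assms(3,4) gap[unfolded k_def]
          s(1)[unfolded k_def] s_gap[unfolded k_def]])
      (simp_all add: harmonic_after_def xs_def numeral_2_eq_2 k_def)
  ultimately show ?thesis
    by blast
qed

theorem mainTheorem5:
  fixes lam :: real
  assumes "CARD('k::finite) \<ge> 2" and "lam > 0"
  shows "\<exists>\<eta> :: nat \<Rightarrow> real. (\<forall>t. \<eta> t > 0) \<and> \<eta> \<longlonglongrightarrow> 0 \<and>
           (\<lambda>t. alpha (signgd \<eta> lam t :: real^'k^'k)) \<longlonglongrightarrow> 0"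
proof -
  define k where "k = real CARD('k)"
  have "k > 1"
    using assms(1) unfolding k_def by simp
  obtain a where "a > 0" and gap: "lam * a = k * grad_offdiag k a"
    using stationary_gap_exists[OF \<open>k > 1\<close> assms(2)] by blast
  define T where "T = (diag_off ((k - 1) * a / k) (- a / k) :: real^'k^'k)"
  obtain xs where pos: "\<forall>x\<in>set xs. x > 0"
    and reach: "signgd (harmonic_after xs) lam (length xs) = T"
    using signgd_reaches_stationary[OF assms \<open>a > 0\<close>] gap unfolding T_def k_def by blast
  have "gradL T + lam *\<^sub>R T = 0"
    using stationary_diag_off gap unfolding T_def k_def by blast
  then have "\<forall>\<^sub>F t in sequentially. signgd (harmonic_after xs) lam t = T"
    unfolding eventually_sequentially using signgd_stationary reach by blast
  moreover have "alpha T = 0"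
    using \<open>k > 1\<close> by (simp add: T_def alpha_diag_off k_def[symmetric] field_simps)
  ultimately have "\<forall>\<^sub>F t in sequentially. 0 = alpha (signgd (harmonic_after xs) lam t :: real^'k^'k)"
    by (auto elim: eventually_mono)
  then have "(\<lambda>t. alpha (signgd (harmonic_after xs) lam t :: real^'k^'k)) \<longlonglongrightarrow> 0"
    by (rule Lim_transform_eventually[OF tendsto_const])
  then show ?thesis
    using harmonic_after_pos[OF pos] harmonic_after_LIMSEQ by blast
qed

end
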